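(* The operator $A:=A_1:\mathcal{X}^+\to\mathcal{X}'$ is monotone: for all $(m,u,h),(\mu,v,k)\in\mathcal{X}^+$, \[ \langle A(m,u,h)-A(\mu,v,k),\,(m-\mu,\,u-v,\,h-k)\rangle\ge0. \]
   Context: Setting. $\Omega\subset\mathbb{R}^d$ is open, bounded, connected, with $C^1$ boundary $\Gamma=\partial\Omega$; $ds$ denotes the surface measure $d\mathcal{H}^{d-1}$. $\Gamma=\overline{\Gamma_D\cup\Gamma_N}$, where $\Gamma_D,\Gamma_N$ are disjoint, nonempty, relatively open $C^1$ $(d-1)$-dimensional manifolds of positive $\mathcal{H}^{d-1}$-measure with $\mathcal{H}^{d-1}(\partial\Gamma_D\cap\partial\Gamma_N)=0$. Boundary values of Sobolev functions are traces. Exponents: $\alpha>1$, $\beta>0$, $\gamma=\frac{\beta+1}{\beta}\alpha$, $\gamma'=\gamma/(\gamma-1)$. Data: $j\in L^{\gamma'}(\Gamma_N)$, $j\ge0$, $j\not\equiv0$. $g:[0,\infty)\to\mathbb{R}$ is continuous and strictly increasing, and there is $C>1$ with $C^{-1}m^\beta-C\le g(m)\le Cm^\beta+C$ for all $m\ge0$. $H:\overline\Omega\times\mathbb{R}^d\to\mathbb{R}$ is measurable in $x$, and for a.e. $x$, $H(x,\cdot)\in C^1(\mathbb{R}^d)$ is convex; there is $C>1$ such that for a.e. $x\in\Omega$ and all $p\in\mathbb{R}^d$: $|D_pH(x,p)|\le C|p|^{\alpha-1}+C$, $H(x,0)\le C$, and one of the following holds: (a) $H(x,p)\ge C^{-1}|p|^\alpha-C$;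 (b) $D_pH(x,p)\cdot p\ge C^{-1}|p|^\alpha-C$ and $H(x,p)\ge -C$; (c) $-H(x,p)+D_pH(x,p)\cdot p\ge C^{-1}|p|^\alpha-C$ and $H(x,p)\ge-C$. Spaces. $\mathcal{X}=L^{\beta+1}(\Omega)\times W^{1,\gamma}(\Omega)\times L^{\gamma'}(\Gamma_D)$, $\mathcal{X}'$ its dual, and $\mathcal{X}^+=\{(m,u,h)\in\mathcal{X}: m\ge0\text{ a.e. in }\Omega,\ h\ge0\text{ a.e. on }\Gamma_D\}$. Operator. For $\epsilon>0$, $(m,u,h)\in\mathcal{X}^+$ and $(\mu,v,k)\in\mathcal{X}$, \[\langle A_\epsilon(m,u,h),(\mu,v,k)\rangle=\int_\Omega(-H(x,Du)+g(m))\mu\,dx+\int_\Omega mD_pH(x,Du)\cdot Dv\,dx-\int_{\Gamma_N}jv\,ds+\int_{\Gamma_D}hv\,ds+\int_{\Gamma_D}(-u+\epsilon^{\gamma'}h^{\gamma'-1})k\,ds.\] *)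

theory Defs
  imports "HOL-Analysis.Analysis"
begin

definition hausdorff_const :: "real \<Rightarrow> real" where
  "hausdorff_const s = pi powr (s / 2) / Gamma (s / 2 + 1)"

text \<open>Contribution of one covering set to the Hausdorff sum; the conventions
  diam(empty)^s = 0 and diam(C)^0 = 1 for nonempty C are made explicit.\<close>
definition hausdorff_term :: "real \<Rightarrow> 'a::metric_space set \<Rightarrow> real" where
  "hausdorff_term s C =
     (if C = {} then 0
      else if s = 0 then 1
      else hausdorff_const s * (diameter C / 2) powr s)"

definition hausdorff_pre :: "real \<Rightarrow> real \<Rightarrow> 'a::metric_space set \<Rightarrow> ennreal" where
  "hausdorff_pre s \<delta> A =
     (INF C \<in> {C :: nat \<Rightarrow> 'a set. A \<subseteq> (\<Union>i. C i) \<and>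
                   (\<forall>i. bounded (C i) \<and> diameter (C i) \<le> \<delta>)}.
        (\<Sum>i. ennreal (hausdorff_term s (C i))))"

definition hausdorff_outer :: "real \<Rightarrow> 'a::metric_space set \<Rightarrow> ennreal" where
  "hausdorff_outer s A = (SUP \<delta> \<in> {0<..}. hausdorff_pre s \<delta> A)"

definition hausdorff_measure :: "real \<Rightarrow> ('a::metric_space) measure" where
  "hausdorff_measure s = measure_of UNIV (sets borel) (hausdorff_outer s)"

definition surface_measure :: "(real^'n) measure" where
  "surface_measure = hausdorff_measure (real CARD('n) - 1)"

definition Lp_on :: "'a measure \<Rightarrow> real \<Rightarrow> ('a \<Rightarrow> real) \<Rightarrow> bool" where
  "Lp_on M p f \<longleftrightarrow> f \<in> borel_measurable M \<and> integrable M (\<lambda>x. \<bar>f x\<bar> powr p)"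

definition C1_with_grad :: "(real^'n \<Rightarrow> real) \<Rightarrow> (real^'n \<Rightarrow> real^'n) \<Rightarrow> bool" where
  "C1_with_grad \<phi> g\<phi> \<longleftrightarrow> continuous_on UNIV g\<phi> \<and>
      (\<forall>x. (\<phi> has_derivative (\<lambda>h. g\<phi> x \<bullet> h)) (at x))"

definition weak_grad :: "(real^'n) set \<Rightarrow> (real^'n \<Rightarrow> real) \<Rightarrow> (real^'n \<Rightarrow> real^'n) \<Rightarrow> bool" where
  "weak_grad \<Omega> u Du \<longleftrightarrow>
     (\<forall>\<phi> g\<phi>. C1_with_grad \<phi> g\<phi> \<and> compact (closure {x. \<phi> x \<noteq> 0}) \<and>
        closure {x. \<phi> x \<noteq> 0} \<subseteq> \<Omega> \<longrightarrow>
        (\<forall>i. integral\<^sup>L (lebesgue_on \<Omega>) (\<lambda>x. u x * g\<phi> x $ i) =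
             - integral\<^sup>L (lebesgue_on \<Omega>) (\<lambda>x. Du x $ i * \<phi> x)))"

definition W1p :: "(real^'n) set \<Rightarrow> real \<Rightarrow> (real^'n \<Rightarrow> real) \<Rightarrow> (real^'n \<Rightarrow> real^'n) \<Rightarrow> bool" where
  "W1p \<Omega> p u Du \<longleftrightarrow> Lp_on (lebesgue_on \<Omega>) p u \<and>
      Du \<in> borel_measurable (lebesgue_on \<Omega>) \<and>
      integrable (lebesgue_on \<Omega>) (\<lambda>x. norm (Du x) powr p) \<and>
      weak_grad \<Omega> u Du"

definition trace_of :: "(real^'n) set \<Rightarrow> real \<Rightarrow> (real^'n \<Rightarrow> real) \<Rightarrow> (real^'n \<Rightarrow> real^'n)
                          \<Rightarrow> (real^'n \<Rightarrow> real) \<Rightarrow> bool" where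
  "trace_of \<Omega> p u Du Tu \<longleftrightarrow>
     Lp_on (restrict_space surface_measure (frontier \<Omega>)) p Tu \<and>
     (\<exists>\<phi> g\<phi>. (\<forall>n. C1_with_grad (\<phi> n) (g\<phi> n)) \<and>
        (\<lambda>n. integral\<^sup>L (lebesgue_on \<Omega>) (\<lambda>x. \<bar>\<phi> n x - u x\<bar> powr p)) \<longlonglongrightarrow> 0 \<and>
        (\<lambda>n. integral\<^sup>L (lebesgue_on \<Omega>) (\<lambda>x. norm (g\<phi> n x - Du x) powr p)) \<longlonglongrightarrow> 0 \<and>
        (\<lambda>n. integral\<^sup>L (restrict_space surface_measure (frontier \<Omega>))
                (\<lambda>x. \<bar>\<phi> n x - Tu x\<bar> powr p)) \<longlonglongrightarrow> 0)"

definition C1_boundary :: "(real^'n) set \<Rightarrow> bool" where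
  "C1_boundary \<Omega> \<longleftrightarrow>
     (\<forall>x0 \<in> frontier \<Omega>. \<exists>U \<psi> g\<psi>. open U \<and> x0 \<in> U \<and> continuous_on U g\<psi> \<and>
        (\<forall>x\<in>U. (\<psi> has_derivative (\<lambda>h. g\<psi> x \<bullet> h)) (at x) \<and> g\<psi> x \<noteq> 0) \<and>
        \<Omega> \<inter> U = {x\<in>U. \<psi> x < 0})"

definition in_Xplus :: "(real^'n) set \<Rightarrow> (real^'n) set \<Rightarrow> real \<Rightarrow> real \<Rightarrow> real
     \<Rightarrow> (real^'n \<Rightarrow> real) \<Rightarrow> (real^'n \<Rightarrow> real) \<Rightarrow> (real^'n \<Rightarrow> real^'n) \<Rightarrow> (real^'n \<Rightarrow> real)
     \<Rightarrow> (real^'n \<Rightarrow> real) \<Rightarrow> bool" where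
  "in_Xplus \<Omega> \<Gamma>D \<beta> \<gamma> \<gamma>' m u Du Tu h \<longleftrightarrow>
     Lp_on (lebesgue_on \<Omega>) (\<beta> + 1) m \<and> W1p \<Omega> \<gamma> u Du \<and> trace_of \<Omega> \<gamma> u Du Tu \<and>
     Lp_on (restrict_space surface_measure \<Gamma>D) \<gamma>' h \<and>
     (AE x in lebesgue_on \<Omega>. m x \<ge> 0) \<and>
     (AE x in restrict_space surface_measure \<Gamma>D. h x \<ge> 0)"

text \<open>The pairing of A_eps(m,u,h) with a test triple (mu,v,k); the test
  function v enters only through its weak gradient Dv and its trace Tv.\<close>
definition A_pairing :: "(real^'n) set \<Rightarrow> (real^'n) set \<Rightarrow> (real^'n) set
     \<Rightarrow> (real^'n \<Rightarrow> real^'n \<Rightarrow> real) \<Rightarrow> (real^'n \<Rightarrow> real^'n \<Rightarrow> real^'n) \<Rightarrow> (real \<Rightarrow> real)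
     \<Rightarrow> (real^'n \<Rightarrow> real) \<Rightarrow> real \<Rightarrow> real
     \<Rightarrow> (real^'n \<Rightarrow> real) \<Rightarrow> (real^'n \<Rightarrow> real^'n) \<Rightarrow> (real^'n \<Rightarrow> real) \<Rightarrow> (real^'n \<Rightarrow> real)
     \<Rightarrow> (real^'n \<Rightarrow> real) \<Rightarrow> (real^'n \<Rightarrow> real^'n) \<Rightarrow> (real^'n \<Rightarrow> real) \<Rightarrow> (real^'n \<Rightarrow> real)
     \<Rightarrow> real" where
  "A_pairing \<Omega> \<Gamma>N \<Gamma>D H DpH g j \<gamma>' \<epsilon> m Du Tu h \<mu> Dv Tv k =
      integral\<^sup>L (lebesgue_on \<Omega>) (\<lambda>x. (- H x (Du x) + g (m x)) * \<mu> x)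
    + integral\<^sup>L (lebesgue_on \<Omega>) (\<lambda>x. m x * (DpH x (Du x) \<bullet> Dv x))
    - integral\<^sup>L (restrict_space surface_measure \<Gamma>N) (\<lambda>x. j x * Tv x)
    + integral\<^sup>L (restrict_space surface_measure \<Gamma>D) (\<lambda>x. h x * Tv x)
    + integral\<^sup>L (restrict_space surface_measure \<Gamma>D)
        (\<lambda>x. (- Tu x + \<epsilon> powr \<gamma>' * h x powr (\<gamma>' - 1)) * k x)"

end

theory Submission
  imports Defs
begin

text \<open>Pointwise, the interior integrand of the pairing is
  (g m - g \<mu>)(m - \<mu>) + m (H(Dv) - H(Du) - DpH(Du) \<bullet> (Dv - Du))
    + \<mu> (H(Du) - H(Dv) - DpH(Dv) \<bullet> (Du - Dv)),
  which is nonnegative because g is monotone and H is convex; the boundary integrand reduces to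
  \<epsilon>^\<gamma>' (h^(\<gamma>'-1) - k^(\<gamma>'-1)) (h - k) \<ge> 0, and the j-terms cancel.
  The real work is to justify splitting the integrals. Every term is measurable: H(x, Du x) by a
  Caratheodory argument, and DpH(x, Du x) \<bullet> w x as a limit of difference quotients of H.
  By Young's inequality for the conjugate pairs (\<beta> + 1, \<gamma>/\<alpha>) and (\<gamma>', \<gamma>), every term is
  dominated by a multiple of |m|^(\<beta>+1) + |\<mu>|^(\<beta>+1) + |Du|^\<gamma> + |Dv|^\<gamma> + 1 in \<Omega>,
  resp. of |h|^\<gamma>' + |k|^\<gamma>' + |Tu|^\<gamma> + |Tv|^\<gamma> on \<Gamma>D.\<close>

section \<open>Exponents and Young-type inequalities\<close>

lemma powr_le_powr_divide_of_powr_le: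
  fixes a x P E :: real
  assumes "0 \<le> a" "0 \<le> x" "0 < P" "a powr P \<le> E"
  shows "a powr x \<le> E powr (x / P)"
proof -
  have "a powr x = (a powr P) powr (x / P)"
    using assms by (simp add: powr_powr)
  also have "\<dots> \<le> E powr (x / P)"
    using assms by (intro powr_mono2) auto
  finally show ?thesis .
qed

lemma mult_powr_le_of_conjugate:
  fixes a b x y P Q E :: real
  assumes "0 \<le> a" "0 \<le> b" "0 \<le> x" "0 \<le> y" "0 < P" "0 < Q" "x / P + y / Q = 1"
    and "a powr P \<le> E" "b powr Q \<le> E"
  shows "a powr x * b powr y \<le> E"
proof -
  have "0 \<le> E"
    using assms(8) powr_ge_zero order_trans by blast
  have "a powr x * b powr y \<le> E powr (x / P) * E powr (y / Q)"
    using assms by (intro mult_mono powr_le_powr_divide_of_powr_le) auto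
  also have "\<dots> = E"
    using assms(7) \<open>0 \<le> E\<close> by (simp add: powr_add[symmetric])
  finally show ?thesis .
qed

lemma mult3_powr_le:
  fixes a b c x y z P Q R E :: real
  assumes "0 \<le> a" "0 \<le> b" "0 \<le> c" "0 \<le> x" "0 \<le> y" "0 \<le> z" "0 < P" "0 < Q" "0 < R"
    and "x / P + y / Q + z / R \<le> 1" "1 \<le> E"
    and "a powr P \<le> E" "b powr Q \<le> E" "c powr R \<le> E"
  shows "a powr x * b powr y * c powr z \<le> E"
proof -
  have "a powr x \<le> E powr (x / P)" "b powr y \<le> E powr (y / Q)" "c powr z \<le> E powr (z / R)"
    using assms by (simp_all add: powr_le_powr_divide_of_powr_le)
  then have "a powr x * b powr y * c powr z \<le> E powr (x / P) * E powr (y / Q) * E powr (z / R)"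
    by (intro mult_mono) auto
  also have "\<dots> = E powr (x / P + y / Q + z / R)"
    by (simp add: powr_add)
  also have "\<dots> \<le> E powr 1"
    using assms(10,11) by (rule powr_mono)
  finally show ?thesis
    using \<open>1 \<le> E\<close> by simp
qed

lemma exponent_relations:
  fixes \<alpha> \<beta> \<gamma> :: real
  assumes "1 < \<alpha>" "0 < \<beta>" "\<gamma> = (\<beta> + 1) / \<beta> * \<alpha>"
  shows "\<alpha> / \<gamma> + 1 / (\<beta> + 1) = 1" "1 < \<gamma>"
proof -
  have "1 < (\<beta> + 1) / \<beta>"
    using assms by simp
  then show "1 < \<gamma>"
    using less_1_mult assms(1,3) by blast
  have "\<alpha> * (\<beta> + 1) = \<beta> * \<gamma>"
    using assms by (simp add: field_simps)
  then have "\<alpha> / \<gamma> = \<beta> / (\<beta> + 1)"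
    using assms \<open>1 < \<gamma>\<close> by (simp add: frac_eq_eq)
  then show "\<alpha> / \<gamma> + 1 / (\<beta> + 1) = 1"
    using assms by (simp add: add_divide_distrib[symmetric])
qed

lemma conjugate_exponent_relations:
  fixes \<gamma> \<gamma>' :: real
  assumes "1 < \<gamma>" "\<gamma>' = \<gamma> / (\<gamma> - 1)"
  shows "1 / \<gamma>' + 1 / \<gamma> = 1" "1 < \<gamma>'"
proof -
  have "1 / \<gamma>' = (\<gamma> - 1) / \<gamma>"
    using assms by simp
  then show "1 / \<gamma>' + 1 / \<gamma> = 1"
    using assms by (simp add: diff_divide_distrib)
  have "\<gamma>' = 1 + 1 / (\<gamma> - 1)"
    using assms by (simp add: field_simps)
  then show "1 < \<gamma>'"
    using assms by simp
qed

lemma mono_on_mult_diff_nonneg: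
  fixes f :: "real \<Rightarrow> real"
  assumes "mono_on {0..} f" "0 \<le> a" "0 \<le> b"
  shows "0 \<le> (f a - f b) * (a - b)"
proof (cases "a \<le> b")
  case True
  then have "f a \<le> f b"
    using mono_onD[OF assms(1)] assms by simp
  then show ?thesis
    using True by (simp add: mult_nonpos_nonpos)
next
  case False
  then have "f b \<le> f a"
    using mono_onD[OF assms(1)] assms by simp
  then show ?thesis
    using False by simp
qed

section \<open>Differentiable convex functions\<close>

lemma difference_quotients_tendsto_gradient:
  fixes f :: "'a::real_inner \<Rightarrow> real"
  assumes "(f has_derivative (\<lambda>q. G \<bullet> q)) (at p)"
  shows "(\<lambda>n. real (Suc n) * (f (p + inverse (real (Suc n)) *\<^sub>R w) - f p)) \<longlonglongrightarrow> G \<bullet> w"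
proof -
  have "((\<lambda>t::real. p + t *\<^sub>R w) has_derivative (\<lambda>t. t *\<^sub>R w)) (at 0)"
    by (auto intro!: derivative_eq_intros)
  then have "((\<lambda>t. f (p + t *\<^sub>R w)) has_derivative (\<lambda>t. G \<bullet> (t *\<^sub>R w))) (at 0)"
    using has_derivative_compose[of "\<lambda>t. p + t *\<^sub>R w"] assms by fastforce
  moreover have "(\<lambda>t. G \<bullet> (t *\<^sub>R w)) = (*) (G \<bullet> w)"
    by (simp add: fun_eq_iff)
  ultimately have "((\<lambda>t. f (p + t *\<^sub>R w)) has_field_derivative G \<bullet> w) (at 0)"
    by (simp add: has_field_derivative_def)
  then have "((\<lambda>t. (f (p + t *\<^sub>R w) - f p) / t) \<longlongrightarrow> G \<bullet> w) (at 0)"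
    unfolding has_field_derivative_iff by simp
  moreover have "filterlim (\<lambda>n. inverse (real (Suc n))) (at 0) sequentially"
    unfolding filterlim_at using LIMSEQ_inverse_real_of_nat by auto
  ultimately show ?thesis
    by (auto dest: filterlim_compose simp: divide_inverse mult.commute)
qed

lemma convex_on_gradient_inequality:
  fixes f :: "'a::real_inner \<Rightarrow> real"
  assumes "convex_on UNIV f" "(f has_derivative (\<lambda>q. G \<bullet> q)) (at p)"
  shows "f p + G \<bullet> (q - p) \<le> f q"
proof -
  have "real (Suc n) * (f (p + inverse (real (Suc n)) *\<^sub>R (q - p)) - f p) \<le> f q - f p" for n
  proof -
    define t where "t = inverse (real (Suc n))"
    have t: "0 < t" "t \<le> 1"
      by (auto simp: t_def field_simps)
    have "f (p + t *\<^sub>R (q - p)) = f ((1 - t) *\<^sub>R p + t *\<^sub>R q)"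
      by (simp add: algebra_simps)
    also have "\<dots> \<le> (1 - t) * f p + t * f q"
      using convex_onD[OF assms(1)] t by simp
    finally have "f (p + t *\<^sub>R (q - p)) - f p \<le> t * (f q - f p)"
      by (simp add: algebra_simps)
    then show ?thesis
      unfolding t_def by (simp add: field_simps del: of_nat_Suc)
  qed
  then have "G \<bullet> (q - p) \<le> f q - f p"
    by (intro LIMSEQ_le_const2[OF difference_quotients_tendsto_gradient[OF assms(2)]]) auto
  then show ?thesis
    by simp
qed

lemma abs_convex_le_of_gradient_growth:
  fixes f :: "'a::real_inner \<Rightarrow> real"
  assumes "convex_on UNIV f" "(f has_derivative (\<lambda>q. G \<bullet> q)) (at p)"
    and "norm G \<le> C * norm p powr (\<alpha> - 1) + C" "f 0 \<le> C" "- C \<le> f p" "0 \<le> C"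
  shows "\<bar>f p\<bar> \<le> C * (2 + norm p powr \<alpha> + norm p)"
proof -
  have "f p \<le> f 0 + G \<bullet> p"
    using convex_on_gradient_inequality[OF assms(1,2), of 0] by simp
  also have "\<dots> \<le> C + norm G * norm p"
    using assms(4) norm_cauchy_schwarz[of G p] by linarith
  also have "\<dots> \<le> C + (C * norm p powr (\<alpha> - 1) + C) * norm p"
    using assms(3) by (simp add: mult_right_mono)
  also have "\<dots> = C + C * norm p powr \<alpha> + C * norm p"
    using powr_mult_base'[of "norm p" "\<alpha> - 1"] by (simp add: algebra_simps)
  finally have "f p \<le> C + C * norm p powr \<alpha> + C * norm p" .
  moreover have "0 \<le> C * norm p powr \<alpha>" "0 \<le> C * norm p"
    using assms(6) by simp_all
  moreover have "C * (2 + norm p powr \<alpha> + norm p) = 2 * C + C * norm p powr \<alpha> + C * norm p"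
    by (simp add: algebra_simps)
  ultimately show ?thesis
    using assms(5,6) unfolding abs_le_iff by linarith
qed

lemma hamiltonian_integrand_nonneg:
  fixes f :: "'a::real_inner \<Rightarrow> real"
  assumes "convex_on UNIV f"
    and "(f has_derivative (\<lambda>q. G u \<bullet> q)) (at u)" "(f has_derivative (\<lambda>q. G v \<bullet> q)) (at v)"
    and "0 \<le> a" "0 \<le> b" "0 \<le> (ga - gb) * (a - b)"
  shows "0 \<le> (- f u + ga) * (a - b) + a * (G u \<bullet> (u - v))
              - ((- f v + gb) * (a - b) + b * (G v \<bullet> (u - v)))"
proof -
  have "f u + G u \<bullet> (v - u) \<le> f v" "f v + G v \<bullet> (u - v) \<le> f u"
    using convex_on_gradient_inequality[OF assms(1)] assms(2,3) by blast+
  then have "0 \<le> a * (f v - f u - G u \<bullet> (v - u))" "0 \<le> b * (f u - f v - G v \<bullet> (u - v))"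
    using assms(4,5) by simp_all
  then show ?thesis
    using assms(6) by (simp add: algebra_simps)
qed

lemma boundary_integrand_nonneg:
  fixes h k r c tu tv :: real
  assumes "0 \<le> h" "0 \<le> k" "0 \<le> r" "0 \<le> c"
  shows "0 \<le> h * (tu - tv) + (- tu + c * h powr r) * (h - k)
              - (k * (tu - tv) + (- tv + c * k powr r) * (h - k))"
proof -
  have "mono_on {0..} (\<lambda>x::real. x powr r)"
    using assms(3) by (intro mono_onI powr_mono2) auto
  then have "0 \<le> (h powr r - k powr r) * (h - k)"
    using assms(1,2) by (rule mono_on_mult_diff_nonneg)
  then have "0 \<le> c * ((h powr r - k powr r) * (h - k))"
    using assms(4) by simp
  then show ?thesis
    by (simp add: algebra_simps)
qed

lemma hamiltonian_term_bound:
  fixes a b n d Hv gv Ch Cg E \<alpha> \<beta> \<gamma> :: real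
  assumes expo: "1 < \<alpha>" "0 < \<beta>" "\<gamma> = (\<beta> + 1) / \<beta> * \<alpha>"
    and nonneg: "0 \<le> a" "0 \<le> b" "0 \<le> n" "0 \<le> Ch" "0 \<le> Cg"
    and bounds: "\<bar>Hv\<bar> \<le> Ch * (2 + n powr \<alpha> + n)" "\<bar>gv\<bar> \<le> Cg * (a powr \<beta> + 1)" "\<bar>d\<bar> \<le> a + b"
    and E: "a powr (\<beta> + 1) \<le> E" "b powr (\<beta> + 1) \<le> E" "n powr \<gamma> \<le> E" "1 \<le> E"
  shows "\<bar>(- Hv + gv) * d\<bar> \<le> 12 * (Ch + Cg) * E"
proof -
  obtain conj: "\<alpha> / \<gamma> + 1 / (\<beta> + 1) = 1" and "1 < \<gamma>"
    using exponent_relations[OF expo] by blast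
  then have "1 / \<gamma> + 1 / (\<beta> + 1) \<le> 1"
    using expo(1) by (smt (verit) divide_right_mono)
  have young: "u powr x * v powr y \<le> E"
    if "0 \<le> u" "0 \<le> v" "0 \<le> x" "0 \<le> y" "0 < P" "0 < Q" "x / P + y / Q \<le> 1"
      "u powr P \<le> E" "v powr Q \<le> E" for u v x y P Q
    using mult3_powr_le[of u v 1 x y 0 P Q 1 E] that E(4) by simp
  have "n powr \<alpha> * a \<le> E" "n powr \<alpha> * b \<le> E" "n * a \<le> E" "n * b \<le> E"
    using young[of n _ \<alpha> 1 \<gamma> "\<beta> + 1"] young[of n _ 1 1 \<gamma> "\<beta> + 1"]
      conj \<open>1 / \<gamma> + 1 / (\<beta> + 1) \<le> 1\<close> \<open>1 < \<gamma>\<close> expo nonneg E by auto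
  moreover have "a powr \<beta> * a \<le> E" "a powr \<beta> * b \<le> E"
    using young[of a _ \<beta> 1 "\<beta> + 1" "\<beta> + 1"] expo nonneg E by (auto simp: add_divide_distrib[symmetric])
  moreover have "a \<le> E" "b \<le> E"
    using young[of _ 1 1 0 "\<beta> + 1" 1] expo nonneg E by auto
  ultimately have monomials: "((2 + n powr \<alpha> + n) + (a powr \<beta> + 1)) * (a + b) \<le> 12 * E"
    by (simp add: algebra_simps)
  have "\<bar>(- Hv + gv) * d\<bar> \<le> (Ch * (2 + n powr \<alpha> + n) + Cg * (a powr \<beta> + 1)) * (a + b)"
    unfolding abs_mult using bounds nonneg by (intro mult_mono) auto
  also have "\<dots> \<le> (Ch + Cg) * (((2 + n powr \<alpha> + n) + (a powr \<beta> + 1)) * (a + b))"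
    using nonneg by (simp add: algebra_simps mult_right_mono)
  also have "\<dots> \<le> (Ch + Cg) * (12 * E)"
    using monomials nonneg by (intro mult_left_mono) auto
  also have "\<dots> = 12 * (Ch + Cg) * E"
    by simp
  finally show ?thesis .
qed

lemma transport_term_bound:
  fixes a na nb Ch E \<alpha> \<beta> \<gamma> :: real and G w :: "'a::real_inner"
  assumes expo: "1 < \<alpha>" "0 < \<beta>" "\<gamma> = (\<beta> + 1) / \<beta> * \<alpha>"
    and nonneg: "0 \<le> a" "0 \<le> na" "0 \<le> nb" "0 \<le> Ch"
    and bounds: "norm G \<le> Ch * na powr (\<alpha> - 1) + Ch" "norm w \<le> na + nb"
    and E: "a powr (\<beta> + 1) \<le> E" "na powr \<gamma> \<le> E" "nb powr \<gamma> \<le> E" "1 \<le> E"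
  shows "\<bar>a * (G \<bullet> w)\<bar> \<le> 4 * Ch * E"
proof -
  obtain conj: "\<alpha> / \<gamma> + 1 / (\<beta> + 1) = 1" and "1 < \<gamma>"
    using exponent_relations[OF expo] by blast
  then have "(\<alpha> - 1) / \<gamma> + 1 / \<gamma> + 1 / (\<beta> + 1) \<le> 1" "1 / \<gamma> + 1 / (\<beta> + 1) + 0 / 1 \<le> 1"
    using expo(1) by (simp_all add: diff_divide_distrib) (smt (verit) divide_right_mono)
  then have "na powr (\<alpha> - 1) * na * a \<le> E" "na powr (\<alpha> - 1) * nb * a \<le> E" "na * a \<le> E" "nb * a \<le> E"
    using mult3_powr_le[of na _ a "\<alpha> - 1" 1 1 \<gamma> \<gamma> "\<beta> + 1" E]
      mult3_powr_le[of _ a 1 1 1 0 \<gamma> "\<beta> + 1" 1 E] \<open>1 < \<gamma>\<close> expo nonneg E by auto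
  then have monomials: "(na powr (\<alpha> - 1) + 1) * (na + nb) * a \<le> 4 * E"
    by (simp add: algebra_simps)
  have "\<bar>a * (G \<bullet> w)\<bar> \<le> a * (norm G * norm w)"
    using nonneg by (simp add: abs_mult Cauchy_Schwarz_ineq2 mult_left_mono)
  also have "\<dots> \<le> a * ((Ch * na powr (\<alpha> - 1) + Ch) * (na + nb))"
    using bounds nonneg by (intro mult_left_mono mult_mono) auto
  also have "\<dots> = Ch * ((na powr (\<alpha> - 1) + 1) * (na + nb) * a)"
    by (simp add: algebra_simps)
  also have "\<dots> \<le> Ch * (4 * E)"
    using monomials nonneg by (intro mult_left_mono) auto
  also have "\<dots> = 4 * Ch * E"
    by simp
  finally show ?thesis .
qed

lemma boundary_term_bounds:
  fixes h k tu tv c \<gamma> \<gamma>' E :: real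
  assumes expo: "1 < \<gamma>" "\<gamma>' = \<gamma> / (\<gamma> - 1)" and nonneg: "0 \<le> h" "0 \<le> k" "0 \<le> c"
    and E: "h powr \<gamma>' \<le> E" "k powr \<gamma>' \<le> E" "\<bar>tu\<bar> powr \<gamma> \<le> E" "\<bar>tv\<bar> powr \<gamma> \<le> E"
  shows "\<bar>h * (tu - tv)\<bar> \<le> 2 * E"
    and "\<bar>(- tu + c * h powr (\<gamma>' - 1)) * (h - k)\<bar> \<le> 2 * (1 + c) * E"
proof -
  obtain conj: "1 / \<gamma>' + 1 / \<gamma> = 1" and "1 < \<gamma>'"
    using conjugate_exponent_relations[OF expo] by blast
  have young: "u * \<bar>t\<bar> \<le> E" if "0 \<le> u" "u powr \<gamma>' \<le> E" "\<bar>t\<bar> powr \<gamma> \<le> E" for u t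
    using mult_powr_le_of_conjugate[of u "\<bar>t\<bar>" 1 1 \<gamma>' \<gamma> E] that conj \<open>1 < \<gamma>'\<close> expo(1) by simp
  have "(\<gamma>' - 1) / \<gamma>' + 1 / \<gamma>' = 1"
    using \<open>1 < \<gamma>'\<close> by (simp add: diff_divide_distrib)
  then have young': "h powr (\<gamma>' - 1) * u \<le> E" if "0 \<le> u" "u powr \<gamma>' \<le> E" for u
    using mult_powr_le_of_conjugate[of h u "\<gamma>' - 1" 1 \<gamma>' \<gamma>' E] that nonneg E \<open>1 < \<gamma>'\<close> by simp
  have "\<bar>h * (tu - tv)\<bar> \<le> h * \<bar>tu\<bar> + h * \<bar>tv\<bar>"
    using nonneg by (simp add: abs_mult distrib_left[symmetric] mult_left_mono abs_triangle_ineq4)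
  then show "\<bar>h * (tu - tv)\<bar> \<le> 2 * E"
    using young[of h tu] young[of h tv] nonneg E by simp
  have "\<bar>- tu + c * h powr (\<gamma>' - 1)\<bar> \<le> \<bar>tu\<bar> + c * h powr (\<gamma>' - 1)"
    using abs_triangle_ineq4[of "c * h powr (\<gamma>' - 1)" tu] nonneg by simp
  then have "\<bar>(- tu + c * h powr (\<gamma>' - 1)) * (h - k)\<bar> \<le> (\<bar>tu\<bar> + c * h powr (\<gamma>' - 1)) * (h + k)"
    unfolding abs_mult using nonneg by (intro mult_mono) auto
  also have "\<dots> = h * \<bar>tu\<bar> + k * \<bar>tu\<bar> + c * (h powr (\<gamma>' - 1) * h + h powr (\<gamma>' - 1) * k)"
    by (simp add: algebra_simps)
  also have "\<dots> \<le> 2 * E + c * (2 * E)"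
    using young[of h tu] young[of k tu] young'[of h] young'[of k] nonneg E
    by (intro add_mono mult_left_mono) auto
  finally show "\<bar>(- tu + c * h powr (\<gamma>' - 1)) * (h - k)\<bar> \<le> 2 * (1 + c) * E"
    by (simp add: algebra_simps)
qed

section \<open>Measurability and integrability\<close>

lemma complete_measure_lebesgue_on:
  assumes "S \<in> sets lebesgue"
  shows "complete_measure (lebesgue_on S)"
proof
  fix A B
  assume "B \<subseteq> A" "A \<in> null_sets (lebesgue_on S)"
  then have "A \<subseteq> S" "B \<in> null_sets lebesgue"
    using null_sets_restrict_space[OF assms] completion.complete2 by auto
  then show "B \<in> sets (lebesgue_on S)"
    using \<open>B \<subseteq> A\<close> by (auto simp: sets_restrict_space_iff assms)
qed

lemma LIMSEQ_floor_mult_divide: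
  fixes y :: real
  shows "(\<lambda>n. \<lfloor>real (Suc n) * y\<rfloor> / real (Suc n)) \<longlonglongrightarrow> y"
proof -
  have "norm (\<lfloor>real (Suc n) * y\<rfloor> / real (Suc n) - y) \<le> inverse (real (Suc n))" for n
  proof -
    have "\<lfloor>real (Suc n) * y\<rfloor> / real (Suc n) - y
        = (\<lfloor>real (Suc n) * y\<rfloor> - real (Suc n) * y) / real (Suc n)"
      by (simp add: diff_divide_distrib del: of_nat_Suc)
    then have "norm (\<lfloor>real (Suc n) * y\<rfloor> / real (Suc n) - y)
        = \<bar>\<lfloor>real (Suc n) * y\<rfloor> - real (Suc n) * y\<bar> / real (Suc n)"
      by (simp add: abs_divide del: of_nat_Suc)
    also have "\<dots> \<le> 1 / real (Suc n)"
      by (intro divide_right_mono) linarith+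
    finally show ?thesis
      by (simp add: inverse_eq_divide)
  qed
  then have "(\<lambda>n. \<lfloor>real (Suc n) * y\<rfloor> / real (Suc n) - y) \<longlonglongrightarrow> 0"
    by (intro Lim_null_comparison[OF always_eventually LIMSEQ_inverse_real_of_nat]) auto
  then show ?thesis
    by (simp add: LIM_zero_iff)
qed

context complete_measure
begin

lemma borel_measurable_AE_cong:
  assumes "f \<in> borel_measurable M" "AE x in M. f x = g x"
  shows "g \<in> borel_measurable M"
proof (rule measurableI)
  fix A :: "'b set"
  assume "A \<in> sets borel"
  then have "f -` A \<inter> space M \<in> sets M"
    using assms(1) by (rule measurable_sets[rotated])
  moreover have "AE x in M. x \<in> f -` A \<inter> space M \<longleftrightarrow> x \<in> g -` A \<inter> space M"
    using assms(2) by eventually_elim auto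
  ultimately show "g -` A \<inter> space M \<in> sets M"
    using in_sets_AE by blast
qed auto

lemma borel_measurable_AE_LIMSEQ:
  fixes F :: "nat \<Rightarrow> 'a \<Rightarrow> 'b::{banach, second_countable_topology}"
  assumes "\<And>n. F n \<in> borel_measurable M" "AE x in M. (\<lambda>n. F n x) \<longlonglongrightarrow> g x"
  shows "g \<in> borel_measurable M"
proof (rule borel_measurable_AE_cong)
  show "(\<lambda>x. lim (\<lambda>n. F n x)) \<in> borel_measurable M"
    using assms(1) by measurable
  show "AE x in M. lim (\<lambda>n. F n x) = g x"
    using assms(2) by eventually_elim (simp add: limI)
qed

lemma borel_measurable_continuous_on_comp_nonneg:
  fixes g :: "real \<Rightarrow> real"
  assumes "continuous_on {0..} g" "f \<in> borel_measurable M" "AE x in M. 0 \<le> f x"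
  shows "(\<lambda>x. g (f x)) \<in> borel_measurable M"
proof (rule borel_measurable_AE_cong)
  have "continuous_on UNIV (\<lambda>s. g (max 0 s))"
    by (rule continuous_on_compose2[OF assms(1)]) (auto intro!: continuous_intros)
  then show "(\<lambda>x. g (max 0 (f x))) \<in> borel_measurable M"
    using measurable_compose[OF assms(2) borel_measurable_continuous_onI] by blast
  show "AE x in M. g (max 0 (f x)) = g (f x)"
    using assms(3) by eventually_elim simp
qed

text \<open>F is the pointwise limit of the maps rounding it down to the grid of mesh 1/(n+1),
  which take countably many values.\<close>

lemma borel_measurable_caratheodory:
  fixes H :: "'a \<Rightarrow> real^'n \<Rightarrow> real"
  assumes "\<And>p. (\<lambda>x. H x p) \<in> borel_measurable M" "AE x in M. continuous_on UNIV (H x)"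
    and [measurable]: "F \<in> borel_measurable M"
  shows "(\<lambda>x. H x (F x)) \<in> borel_measurable M"
proof -
  define grid :: "nat \<Rightarrow> ('n \<Rightarrow> int) \<Rightarrow> real^'n" where
    "grid n z = (\<chi> i. z i / real (Suc n))" for n z
  define index :: "nat \<Rightarrow> 'a \<Rightarrow> 'n \<Rightarrow> int" where
    "index n x = (\<lambda>i. \<lfloor>real (Suc n) * F x $ i\<rfloor>)" for n x
  have [measurable]: "(\<lambda>x. F x $ i) \<in> borel_measurable M" for i
    using measurable_compose[OF assms(3) borel_measurable_nth] .
  have "index n \<in> measurable M (count_space UNIV)" for n
  proof -
    have "index n -` {z} \<inter> space M = {x\<in>space M. \<forall>i. \<lfloor>real (Suc n) * F x $ i\<rfloor> = z i}" for z
      by (auto simp: index_def)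
    moreover have "{x\<in>space M. \<forall>i. \<lfloor>real (Suc n) * F x $ i\<rfloor> = z i} \<in> sets M" for z
      by measurable
    ultimately show ?thesis
      by (auto simp: measurable_count_space_eq2_countable)
  qed
  then have "(\<lambda>x. H x (grid n (index n x))) \<in> borel_measurable M" for n
    using measurable_compose_countable[of "\<lambda>z x. H x (grid n z)"] assms(1) by blast
  moreover have grid_conv: "(\<lambda>n. grid n (index n x)) \<longlonglongrightarrow> F x" for x
    unfolding grid_def index_def by (intro vec_tendstoI) (simp only: vec_lambda_beta LIMSEQ_floor_mult_divide)
  have "AE x in M. (\<lambda>n. H x (grid n (index n x))) \<longlonglongrightarrow> H x (F x)"
    using assms(2) by eventually_elim (auto intro: continuous_on_tendsto_compose grid_conv)
  ultimately show ?thesis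
    by (rule borel_measurable_AE_LIMSEQ)
qed

text \<open>No measurability of the gradient G in x is needed: G x (F x) \<bullet> W x is the a.e. limit of
  difference quotients of H along W.\<close>

lemma borel_measurable_gradient_inner:
  fixes H :: "'a \<Rightarrow> real^'n \<Rightarrow> real"
  assumes H: "\<And>p. (\<lambda>x. H x p) \<in> borel_measurable M"
    and grad: "AE x in M. \<forall>p. (H x has_derivative (\<lambda>q. G x p \<bullet> q)) (at p)"
    and [measurable]: "F \<in> borel_measurable M" "W \<in> borel_measurable M"
  shows "(\<lambda>x. G x (F x) \<bullet> W x) \<in> borel_measurable M"
proof (rule borel_measurable_AE_LIMSEQ)
  have cont: "AE x in M. continuous_on UNIV (H x)"
    using grad by eventually_elim
      (metis continuous_at_imp_continuous_on has_derivative_continuous)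
  fix n
  have [measurable]: "(\<lambda>x. H x (F x + inverse (real (Suc n)) *\<^sub>R W x)) \<in> borel_measurable M"
    "(\<lambda>x. H x (F x)) \<in> borel_measurable M"
    by (rule borel_measurable_caratheodory[OF H cont]; measurable)+
  show "(\<lambda>x. real (Suc n) * (H x (F x + inverse (real (Suc n)) *\<^sub>R W x) - H x (F x)))
      \<in> borel_measurable M"
    by measurable
next
  show "AE x in M. (\<lambda>n. real (Suc n) * (H x (F x + inverse (real (Suc n)) *\<^sub>R W x) - H x (F x)))
      \<longlonglongrightarrow> G x (F x) \<bullet> W x"
    using grad by eventually_elim (rule difference_quotients_tendsto_gradient, blast)
qed

end

lemma integrable_dominated:
  fixes f :: "'a \<Rightarrow> real"
  assumes "integrable M E" "f \<in> borel_measurable M" "AE x in M. \<bar>f x\<bar> \<le> c * E x"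
  shows "integrable M f"
proof (rule Bochner_Integration.integrable_bound)
  show "integrable M (\<lambda>x. c * E x)"
    using assms(1) by simp
  show "AE x in M. norm (f x) \<le> norm (c * E x)"
    using assms(3) by eventually_elim (simp add: order_trans[OF _ abs_ge_self])
qed fact

lemma Lp_on_restrict_space_subset:
  fixes f :: "'a \<Rightarrow> real"
  assumes "A \<in> sets M" "B \<in> sets M" "B \<subseteq> A" "Lp_on (restrict_space M A) p f"
  shows "Lp_on (restrict_space M B) p f"
proof -
  have "A \<inter> space M \<in> sets M" "B \<inter> space M \<in> sets M"
    using assms(1,2) by simp_all
  have "integrable (restrict_space M A) (\<lambda>x. \<bar>f x\<bar> powr p)"
    using assms(4) unfolding Lp_on_def by blast
  then have "integrable M (\<lambda>x. indicator A x *\<^sub>R \<bar>f x\<bar> powr p)"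
    by (rule integrable_restrict_space[OF \<open>A \<inter> space M \<in> sets M\<close>, THEN iffD1])
  then have "integrable M (\<lambda>x. indicator B x *\<^sub>R (indicator A x *\<^sub>R \<bar>f x\<bar> powr p))"
    by (rule integrable_mult_indicator[OF assms(2)])
  moreover have "(\<lambda>x. indicator B x *\<^sub>R (indicator A x *\<^sub>R \<bar>f x\<bar> powr p)) = (\<lambda>x. indicator B x *\<^sub>R \<bar>f x\<bar> powr p)"
    using assms(3) by (auto simp: fun_eq_iff split: split_indicator)
  ultimately have "integrable M (\<lambda>x. indicator B x *\<^sub>R \<bar>f x\<bar> powr p)"
    by simp
  then have "integrable (restrict_space M B) (\<lambda>x. \<bar>f x\<bar> powr p)"
    by (rule integrable_restrict_space[OF \<open>B \<inter> space M \<in> sets M\<close>, THEN iffD2])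
  moreover have "f \<in> borel_measurable (restrict_space M B)"
    using assms(3,4) measurable_restrict_mono unfolding Lp_on_def by blast
  ultimately show ?thesis
    unfolding Lp_on_def by blast
qed

section \<open>Monotonicity of the interior and boundary parts\<close>

locale convex_hamiltonian = complete_measure M + finite_measure M
  for M :: "'a measure" +
  fixes H :: "'a \<Rightarrow> real^'n \<Rightarrow> real" and DpH :: "'a \<Rightarrow> real^'n \<Rightarrow> real^'n" and \<alpha> C :: real
  assumes H_measurable: "\<And>p. (\<lambda>x. H x p) \<in> borel_measurable M"
    and H_convex_differentiable: "AE x in M. convex_on UNIV (H x) \<and>
      (\<forall>p. (H x has_derivative (\<lambda>q. DpH x p \<bullet> q)) (at p))"
    and H_growth: "AE x in M. \<forall>p. norm (DpH x p) \<le> C * norm p powr (\<alpha> - 1) + C \<and>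
      H x 0 \<le> C \<and> - C \<le> H x p"
    and C_nonneg: "0 \<le> C"
begin

lemma borel_measurable_H_comp:
  assumes "F \<in> borel_measurable M"
  shows "(\<lambda>x. H x (F x)) \<in> borel_measurable M"
proof (rule borel_measurable_caratheodory[OF H_measurable _ assms])
  show "AE x in M. continuous_on UNIV (H x)"
    using H_convex_differentiable by eventually_elim
      (metis continuous_at_imp_continuous_on has_derivative_continuous)
qed

lemma borel_measurable_DpH_inner:
  assumes "F \<in> borel_measurable M" "W \<in> borel_measurable M"
  shows "(\<lambda>x. DpH x (F x) \<bullet> W x) \<in> borel_measurable M"
  using H_convex_differentiable
  by (intro borel_measurable_gradient_inner[OF H_measurable _ assms]) (auto elim: eventually_mono)

lemma AE_abs_H_le: "AE x in M. \<forall>p. \<bar>H x p\<bar> \<le> C * (2 + norm p powr \<alpha> + norm p)"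
  using H_convex_differentiable H_growth
  by eventually_elim (auto intro!: abs_convex_le_of_gradient_growth C_nonneg)

lemma integrable_hamiltonian_terms:
  fixes g :: "real \<Rightarrow> real" and a b :: "'a \<Rightarrow> real" and P Q :: "'a \<Rightarrow> real^'n"
  assumes expo: "1 < \<alpha>" "0 < \<beta>" "\<gamma> = (\<beta> + 1) / \<beta> * \<alpha>"
    and g: "continuous_on {0..} g" "\<forall>s\<ge>0. \<bar>g s\<bar> \<le> Cg * (s powr \<beta> + 1)"
    and a: "Lp_on M (\<beta> + 1) a" "AE x in M. 0 \<le> a x"
    and b: "Lp_on M (\<beta> + 1) b" "AE x in M. 0 \<le> b x"
    and P: "P \<in> borel_measurable M" "integrable M (\<lambda>x. norm (P x) powr \<gamma>)"
    and Q: "Q \<in> borel_measurable M" "integrable M (\<lambda>x. norm (Q x) powr \<gamma>)"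
  shows "integrable M (\<lambda>x. (- H x (P x) + g (a x)) * (a x - b x))"
    and "integrable M (\<lambda>x. a x * (DpH x (P x) \<bullet> (P x - Q x)))"
proof -
  define E where "E x = \<bar>a x\<bar> powr (\<beta> + 1) + \<bar>b x\<bar> powr (\<beta> + 1)
      + norm (P x) powr \<gamma> + norm (Q x) powr \<gamma> + 1" for x
  have E_integrable: "integrable M E"
    using a b P Q unfolding E_def Lp_on_def by (intro Bochner_Integration.integrable_add) auto
  have [measurable]: "a \<in> borel_measurable M" "b \<in> borel_measurable M" "P \<in> borel_measurable M"
    using a b P by (simp_all add: Lp_on_def)
  have "\<bar>g 0\<bar> \<le> Cg"
    using g(2)[rule_format, of 0] by simp
  then have "0 \<le> Cg"
    by (meson abs_ge_zero order_trans)
  have E: "AE x in M. 0 \<le> a x \<and> 0 \<le> b x \<and> a x powr (\<beta> + 1) \<le> E x \<and> b x powr (\<beta> + 1) \<le> E x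
      \<and> norm (P x) powr \<gamma> \<le> E x \<and> norm (Q x) powr \<gamma> \<le> E x \<and> 1 \<le> E x"
    using a(2) b(2) by eventually_elim (simp add: E_def)
  show "integrable M (\<lambda>x. (- H x (P x) + g (a x)) * (a x - b x))"
  proof (rule integrable_dominated[OF E_integrable])
    have "(\<lambda>x. H x (P x)) \<in> borel_measurable M" "(\<lambda>x. g (a x)) \<in> borel_measurable M"
      using borel_measurable_H_comp borel_measurable_continuous_on_comp_nonneg[OF g(1)] a(2) by simp_all
    then show "(\<lambda>x. (- H x (P x) + g (a x)) * (a x - b x)) \<in> borel_measurable M"
      by measurable
    show "AE x in M. \<bar>(- H x (P x) + g (a x)) * (a x - b x)\<bar> \<le> 12 * (C + Cg) * E x"
      using E AE_abs_H_le
    proof eventually_elim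
      case (elim x)
      then show ?case
        using hamiltonian_term_bound[OF expo, where a="a x" and b="b x" and n="norm (P x)" and Ch=C
            and Cg=Cg and Hv="H x (P x)" and gv="g (a x)" and d="a x - b x" and E="E x"]
          g(2) C_nonneg \<open>0 \<le> Cg\<close> by auto
    qed
  qed
  show "integrable M (\<lambda>x. a x * (DpH x (P x) \<bullet> (P x - Q x)))"
  proof (rule integrable_dominated[OF E_integrable])
    show "(\<lambda>x. a x * (DpH x (P x) \<bullet> (P x - Q x))) \<in> borel_measurable M"
      using borel_measurable_DpH_inner[of P "\<lambda>x. P x - Q x"] P(1) Q(1) by measurable
    show "AE x in M. \<bar>a x * (DpH x (P x) \<bullet> (P x - Q x))\<bar> \<le> 4 * C * E x"
      using E H_growth
    proof eventually_elim
      case (elim x)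
      then show ?case
        using transport_term_bound[OF expo, where a="a x" and na="norm (P x)" and nb="norm (Q x)"
            and Ch=C and G="DpH x (P x)" and w="P x - Q x" and E="E x"]
          C_nonneg norm_triangle_ineq4[of "P x" "Q x"] by auto
    qed
  qed
qed

lemma hamiltonian_part_monotone:
  fixes g :: "real \<Rightarrow> real" and m \<mu> :: "'a \<Rightarrow> real" and P Q :: "'a \<Rightarrow> real^'n"
  assumes expo: "1 < \<alpha>" "0 < \<beta>" "\<gamma> = (\<beta> + 1) / \<beta> * \<alpha>"
    and g: "continuous_on {0..} g" "mono_on {0..} g" "\<forall>s\<ge>0. \<bar>g s\<bar> \<le> Cg * (s powr \<beta> + 1)"
    and m: "Lp_on M (\<beta> + 1) m" "AE x in M. 0 \<le> m x"
    and \<mu>: "Lp_on M (\<beta> + 1) \<mu>" "AE x in M. 0 \<le> \<mu> x"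
    and P: "P \<in> borel_measurable M" "integrable M (\<lambda>x. norm (P x) powr \<gamma>)"
    and Q: "Q \<in> borel_measurable M" "integrable M (\<lambda>x. norm (Q x) powr \<gamma>)"
  shows "0 \<le> (\<integral>x. (- H x (P x) + g (m x)) * (m x - \<mu> x) \<partial>M)
                + (\<integral>x. m x * (DpH x (P x) \<bullet> (P x - Q x)) \<partial>M)
              - ((\<integral>x. (- H x (Q x) + g (\<mu> x)) * (m x - \<mu> x) \<partial>M)
                + (\<integral>x. \<mu> x * (DpH x (Q x) \<bullet> (P x - Q x)) \<partial>M))"
proof -
  note terms = integrable_hamiltonian_terms[OF expo g(1,3)]
  have "integrable M (\<lambda>x. - ((- H x (Q x) + g (\<mu> x)) * (\<mu> x - m x)))"
    "integrable M (\<lambda>x. - (\<mu> x * (DpH x (Q x) \<bullet> (Q x - P x))))"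
    using terms[OF \<mu> m Q P] by simp_all
  then have swapped: "integrable M (\<lambda>x. (- H x (Q x) + g (\<mu> x)) * (m x - \<mu> x))"
    "integrable M (\<lambda>x. \<mu> x * (DpH x (Q x) \<bullet> (P x - Q x)))"
    by (simp_all add: algebra_simps inner_diff_right)
  have "0 \<le> (\<integral>x. (- H x (P x) + g (m x)) * (m x - \<mu> x) + m x * (DpH x (P x) \<bullet> (P x - Q x))
      - ((- H x (Q x) + g (\<mu> x)) * (m x - \<mu> x) + \<mu> x * (DpH x (Q x) \<bullet> (P x - Q x))) \<partial>M)"
    using H_convex_differentiable m(2) \<mu>(2)
    by (intro integral_nonneg_AE, eventually_elim)
      (rule hamiltonian_integrand_nonneg, auto intro: mono_on_mult_diff_nonneg[OF g(2)])
  also have "\<dots> = (\<integral>x. (- H x (P x) + g (m x)) * (m x - \<mu> x) \<partial>M)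
                + (\<integral>x. m x * (DpH x (P x) \<bullet> (P x - Q x)) \<partial>M)
              - ((\<integral>x. (- H x (Q x) + g (\<mu> x)) * (m x - \<mu> x) \<partial>M)
                + (\<integral>x. \<mu> x * (DpH x (Q x) \<bullet> (P x - Q x)) \<partial>M))"
    using terms[OF m \<mu> P Q] swapped by simp
  finally show ?thesis .
qed

end

text \<open>The constant c stands for \<epsilon>^\<gamma>' in the pairing of A_\<epsilon>.\<close>

lemma boundary_part_monotone:
  fixes S :: "'a measure" and h k Tu Tv :: "'a \<Rightarrow> real"
  assumes expo: "1 < \<gamma>" "\<gamma>' = \<gamma> / (\<gamma> - 1)" and "0 \<le> c"
    and h: "Lp_on S \<gamma>' h" "AE x in S. 0 \<le> h x"
    and k: "Lp_on S \<gamma>' k" "AE x in S. 0 \<le> k x"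
    and T: "Lp_on S \<gamma> Tu" "Lp_on S \<gamma> Tv"
  shows "0 \<le> (\<integral>x. h x * (Tu x - Tv x) \<partial>S)
                + (\<integral>x. (- Tu x + c * h x powr (\<gamma>' - 1)) * (h x - k x) \<partial>S)
              - ((\<integral>x. k x * (Tu x - Tv x) \<partial>S)
                + (\<integral>x. (- Tv x + c * k x powr (\<gamma>' - 1)) * (h x - k x) \<partial>S))"
proof -
  define E where "E x = \<bar>h x\<bar> powr \<gamma>' + \<bar>k x\<bar> powr \<gamma>' + \<bar>Tu x\<bar> powr \<gamma> + \<bar>Tv x\<bar> powr \<gamma>" for x
  have E_integrable: "integrable S E"
    using h k T unfolding E_def Lp_on_def by (intro Bochner_Integration.integrable_add) auto
  have [measurable]: "h \<in> borel_measurable S" "k \<in> borel_measurable S"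
    "Tu \<in> borel_measurable S" "Tv \<in> borel_measurable S"
    using h k T by (simp_all add: Lp_on_def)
  note bounds = boundary_term_bounds[OF expo _ _ \<open>0 \<le> c\<close>]
  have "1 < \<gamma>'"
    using conjugate_exponent_relations[OF expo] by blast
  have E: "AE x in S. 0 \<le> h x \<and> 0 \<le> k x \<and> h x powr \<gamma>' \<le> E x \<and> k x powr \<gamma>' \<le> E x
      \<and> \<bar>Tu x\<bar> powr \<gamma> \<le> E x \<and> \<bar>Tv x\<bar> powr \<gamma> \<le> E x"
    using h(2) k(2) by eventually_elim (simp add: E_def)
  have bounded: "AE x in S. \<bar>h x * (Tu x - Tv x)\<bar> \<le> 2 * E x \<and> \<bar>k x * (Tu x - Tv x)\<bar> \<le> 2 * E x
      \<and> \<bar>(- Tu x + c * h x powr (\<gamma>' - 1)) * (h x - k x)\<bar> \<le> 2 * (1 + c) * E x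
      \<and> \<bar>(- Tv x + c * k x powr (\<gamma>' - 1)) * (h x - k x)\<bar> \<le> 2 * (1 + c) * E x"
    using E
  proof eventually_elim
    case (elim x)
    then show ?case
      using bounds[where h="h x" and k="k x" and tu="Tu x" and tv="Tv x" and E="E x"]
        bounds(1)[where h="k x" and k="h x" and tu="Tu x" and tv="Tv x" and E="E x"]
        bounds(2)[where h="k x" and k="h x" and tu="Tv x" and tv="Tu x" and E="E x"]
      by (auto simp: abs_mult abs_minus_commute)
  qed
  have integrable: "integrable S (\<lambda>x. h x * (Tu x - Tv x))"
    "integrable S (\<lambda>x. k x * (Tu x - Tv x))"
    "integrable S (\<lambda>x. (- Tu x + c * h x powr (\<gamma>' - 1)) * (h x - k x))"
    "integrable S (\<lambda>x. (- Tv x + c * k x powr (\<gamma>' - 1)) * (h x - k x))"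
    by (rule integrable_dominated[OF E_integrable _ eventually_mono[OF bounded]], measurable, blast)+
  have "0 \<le> (\<integral>x. h x * (Tu x - Tv x) + (- Tu x + c * h x powr (\<gamma>' - 1)) * (h x - k x)
      - (k x * (Tu x - Tv x) + (- Tv x + c * k x powr (\<gamma>' - 1)) * (h x - k x)) \<partial>S)"
    using h(2) k(2)
    by (intro integral_nonneg_AE, eventually_elim)
      (rule boundary_integrand_nonneg, use \<open>0 \<le> c\<close> \<open>1 < \<gamma>'\<close> in auto)
  also have "\<dots> = (\<integral>x. h x * (Tu x - Tv x) \<partial>S)
                + (\<integral>x. (- Tu x + c * h x powr (\<gamma>' - 1)) * (h x - k x) \<partial>S)
              - ((\<integral>x. k x * (Tu x - Tv x) \<partial>S)
                + (\<integral>x. (- Tv x + c * k x powr (\<gamma>' - 1)) * (h x - k x) \<partial>S))"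
    using integrable by simp
  finally show ?thesis .
qed

lemma sets_surface_measure [simp]: "sets surface_measure = sets borel"
  unfolding surface_measure_def hausdorff_measure_def
  using sets.sigma_sets_eq[of borel] by (simp add: sets_measure_of_conv)

lemma in_XplusD:
  assumes X: "in_Xplus \<Omega> \<Gamma>D \<beta> \<gamma> \<gamma>' m u Du Tu h"
    and \<Gamma>D: "\<Gamma>D \<in> sets borel" "\<Gamma>D \<subseteq> frontier \<Omega>"
  shows "Lp_on (lebesgue_on \<Omega>) (\<beta> + 1) m" "AE x in lebesgue_on \<Omega>. 0 \<le> m x"
    and "Du \<in> borel_measurable (lebesgue_on \<Omega>)" "integrable (lebesgue_on \<Omega>) (\<lambda>x. norm (Du x) powr \<gamma>)"
    and "Lp_on (restrict_space surface_measure \<Gamma>D) \<gamma> Tu"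
    and "Lp_on (restrict_space surface_measure \<Gamma>D) \<gamma>' h"
      "AE x in restrict_space surface_measure \<Gamma>D. 0 \<le> h x"
proof -
  have "Lp_on (restrict_space surface_measure (frontier \<Omega>)) \<gamma> Tu"
    using X unfolding in_Xplus_def trace_of_def by blast
  then show "Lp_on (restrict_space surface_measure \<Gamma>D) \<gamma> Tu"
    by (rule Lp_on_restrict_space_subset[rotated 2, OF \<Gamma>D(2)]) (use \<Gamma>D(1) in simp_all)
qed (use X in \<open>simp_all add: in_Xplus_def W1p_def\<close>)

lemma AE_lebesgue_on_subset:
  assumes "AE x in lebesgue_on T. P x" "S \<subseteq> T" "S \<in> sets lebesgue" "T \<in> sets lebesgue"
  shows "AE x in lebesgue_on S. P x"
  using assms by (auto simp: AE_restrict_space_iff elim!: eventually_mono)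

lemma AE_lower_bound_of_coercivity_alternatives:
  fixes H :: "'a \<Rightarrow> 'b::real_normed_vector \<Rightarrow> real"
  assumes "0 < C"
    and "(AE x in M. \<forall>p. norm p powr \<alpha> / C - C \<le> H x p) \<or>
      (AE x in M. \<forall>p. Q1 x p \<and> - C \<le> H x p) \<or> (AE x in M. \<forall>p. Q2 x p \<and> - C \<le> H x p)"
  shows "AE x in M. \<forall>p. - C \<le> H x p"
proof -
  have "norm p powr \<alpha> / C - C \<le> H x p \<Longrightarrow> - C \<le> H x p" for x p
    using \<open>0 < C\<close> by (smt (verit) divide_nonneg_pos powr_ge_zero)
  then show ?thesis
    using assms(2) by (auto elim!: eventually_mono)
qed

lemma ex_abs_le_of_two_sided_growth:
  fixes g :: "real \<Rightarrow> real"
  assumes "\<exists>C>1. \<forall>s\<ge>0. s powr \<beta> / C - C \<le> g s \<and> g s \<le> C * s powr \<beta> + C"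
  shows "\<exists>C. \<forall>s\<ge>0. \<bar>g s\<bar> \<le> C * (s powr \<beta> + 1)"
proof -
  obtain C where "1 < C" and growth: "\<forall>s\<ge>0. s powr \<beta> / C - C \<le> g s \<and> g s \<le> C * s powr \<beta> + C"
    using assms by blast
  have "\<bar>g s\<bar> \<le> C * (s powr \<beta> + 1)" if "0 \<le> s" for s
  proof -
    have "0 \<le> s powr \<beta> / C" "0 \<le> C * s powr \<beta>"
      using \<open>1 < C\<close> by simp_all
    then show ?thesis
      using growth that by (auto simp: abs_le_iff algebra_simps)
  qed
  then show ?thesis
    by blast
qed

lemma ex_convex_hamiltonian_lebesgue_on:
  fixes H :: "'a::euclidean_space \<Rightarrow> real^'n \<Rightarrow> real" and DpH :: "'a \<Rightarrow> real^'n \<Rightarrow> real^'n"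
  assumes \<Omega>: "open \<Omega>" "bounded \<Omega>"
    and H_meas: "\<forall>p. (\<lambda>x. H x p) \<in> borel_measurable (lebesgue_on (closure \<Omega>))"
    and H_C1: "AE x in lebesgue_on (closure \<Omega>).
        convex_on UNIV (H x) \<and> continuous_on UNIV (DpH x) \<and>
        (\<forall>p. (H x has_derivative (\<lambda>q. DpH x p \<bullet> q)) (at p))"
    and H_growth: "\<exists>C>1.
        (AE x in lebesgue_on \<Omega>. \<forall>p. norm (DpH x p) \<le> C * norm p powr (\<alpha> - 1) + C \<and> H x 0 \<le> C) \<and>
        ((AE x in lebesgue_on \<Omega>. \<forall>p. H x p \<ge> norm p powr \<alpha> / C - C) \<or>
         (AE x in lebesgue_on \<Omega>. \<forall>p. DpH x p \<bullet> p \<ge> norm p powr \<alpha> / C - C \<and> H x p \<ge> - C) \<or>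
         (AE x in lebesgue_on \<Omega>. \<forall>p. - H x p + DpH x p \<bullet> p \<ge> norm p powr \<alpha> / C - C \<and> H x p \<ge> - C))"
  shows "\<exists>C. convex_hamiltonian (lebesgue_on \<Omega>) H DpH \<alpha> C"
proof -
  obtain C where "1 < C" and growth: "AE x in lebesgue_on \<Omega>. \<forall>p.
      norm (DpH x p) \<le> C * norm p powr (\<alpha> - 1) + C \<and> H x 0 \<le> C"
    and coercive: "(AE x in lebesgue_on \<Omega>. \<forall>p. norm p powr \<alpha> / C - C \<le> H x p) \<or>
      (AE x in lebesgue_on \<Omega>. \<forall>p. DpH x p \<bullet> p \<ge> norm p powr \<alpha> / C - C \<and> - C \<le> H x p) \<or>
      (AE x in lebesgue_on \<Omega>. \<forall>p. - H x p + DpH x p \<bullet> p \<ge> norm p powr \<alpha> / C - C \<and> - C \<le> H x p)"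
    using H_growth by blast
  have lower: "AE x in lebesgue_on \<Omega>. \<forall>p. - C \<le> H x p"
    by (rule AE_lower_bound_of_coercivity_alternatives[OF _ coercive]) (use \<open>1 < C\<close> in simp)
  have \<Omega>_sets: "\<Omega> \<in> sets lebesgue" "\<Omega> \<subseteq> closure \<Omega>"
    using \<Omega>(1) closure_subset by auto
  have "convex_hamiltonian (lebesgue_on \<Omega>) H DpH \<alpha> C"
    unfolding convex_hamiltonian_def convex_hamiltonian_axioms_def
  proof (intro conjI allI)
    show "complete_measure (lebesgue_on \<Omega>)"
      using \<Omega>_sets(1) by (rule complete_measure_lebesgue_on)
    show "finite_measure (lebesgue_on \<Omega>)"
      using \<Omega> by (simp add: finite_measure_lebesgue_on lmeasurable_open)
    show "(\<lambda>x. H x p) \<in> borel_measurable (lebesgue_on \<Omega>)" for p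
      using H_meas measurable_restrict_mono \<Omega>_sets by blast
    show "AE x in lebesgue_on \<Omega>. convex_on UNIV (H x) \<and> (\<forall>p. (H x has_derivative (\<lambda>q. DpH x p \<bullet> q)) (at p))"
      using AE_lebesgue_on_subset[OF H_C1 \<Omega>_sets(2,1)] by (auto elim!: eventually_mono)
    show "AE x in lebesgue_on \<Omega>. \<forall>p. norm (DpH x p) \<le> C * norm p powr (\<alpha> - 1) + C \<and>
        H x 0 \<le> C \<and> - C \<le> H x p"
      using lower growth by eventually_elim auto
  qed (use \<open>1 < C\<close> in simp)
  then show ?thesis
    by blast
qed

theorem proposition4p1:
  fixes \<Omega> \<Gamma>D \<Gamma>N :: "(real^'n) set"
    and \<alpha> \<beta> \<gamma> \<gamma>' :: real
    and j :: "real^'n \<Rightarrow> real"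
    and g :: "real \<Rightarrow> real"
    and H :: "real^'n \<Rightarrow> real^'n \<Rightarrow> real"
    and DpH :: "real^'n \<Rightarrow> real^'n \<Rightarrow> real^'n"
    and m u Tu h \<mu> v Tv k :: "real^'n \<Rightarrow> real"
    and Du Dv :: "real^'n \<Rightarrow> real^'n"
  assumes dom: "open \<Omega>" "bounded \<Omega>" "connected \<Omega>" "C1_boundary \<Omega>"
    and bdry: "openin (top_of_set (frontier \<Omega>)) \<Gamma>D" "openin (top_of_set (frontier \<Omega>)) \<Gamma>N"
      "\<Gamma>D \<inter> \<Gamma>N = {}" "\<Gamma>D \<noteq> {}" "\<Gamma>N \<noteq> {}"
      "frontier \<Omega> = closure (\<Gamma>D \<union> \<Gamma>N)"
      "emeasure surface_measure \<Gamma>D > 0" "emeasure surface_measure \<Gamma>N > 0"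
      "emeasure surface_measure ((closure \<Gamma>D - \<Gamma>D) \<inter> (closure \<Gamma>N - \<Gamma>N)) = 0"
    and expo: "\<alpha> > 1" "\<beta> > 0" "\<gamma> = (\<beta> + 1) / \<beta> * \<alpha>" "\<gamma>' = \<gamma> / (\<gamma> - 1)"
    and j: "Lp_on (restrict_space surface_measure \<Gamma>N) \<gamma>' j"
      "AE x in restrict_space surface_measure \<Gamma>N. j x \<ge> 0"
      "\<not> (AE x in restrict_space surface_measure \<Gamma>N. j x = 0)"
    and g: "continuous_on {0..} g" "strict_mono_on {0..} g"
      "\<exists>C>1. \<forall>s\<ge>0. s powr \<beta> / C - C \<le> g s \<and> g s \<le> C * s powr \<beta> + C"
    and H_meas: "\<forall>p. (\<lambda>x. H x p) \<in> borel_measurable (lebesgue_on (closure \<Omega>))"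
    and H_C1: "AE x in lebesgue_on (closure \<Omega>).
        convex_on UNIV (H x) \<and> continuous_on UNIV (DpH x) \<and>
        (\<forall>p. (H x has_derivative (\<lambda>q. DpH x p \<bullet> q)) (at p))"
    and H_growth: "\<exists>C>1.
        (AE x in lebesgue_on \<Omega>. \<forall>p. norm (DpH x p) \<le> C * norm p powr (\<alpha> - 1) + C \<and> H x 0 \<le> C) \<and>
        ((AE x in lebesgue_on \<Omega>. \<forall>p. H x p \<ge> norm p powr \<alpha> / C - C) \<or>
         (AE x in lebesgue_on \<Omega>. \<forall>p. DpH x p \<bullet> p \<ge> norm p powr \<alpha> / C - C \<and> H x p \<ge> - C) \<or>
         (AE x in lebesgue_on \<Omega>. \<forall>p. - H x p + DpH x p \<bullet> p \<ge> norm p powr \<alpha> / C - C \<and> H x p \<ge> - C))"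
    and X1: "in_Xplus \<Omega> \<Gamma>D \<beta> \<gamma> \<gamma>' m u Du Tu h"
    and X2: "in_Xplus \<Omega> \<Gamma>D \<beta> \<gamma> \<gamma>' \<mu> v Dv Tv k"
  shows "A_pairing \<Omega> \<Gamma>N \<Gamma>D H DpH g j \<gamma>' 1 m Du Tu h
           (\<lambda>x. m x - \<mu> x) (\<lambda>x. Du x - Dv x) (\<lambda>x. Tu x - Tv x) (\<lambda>x. h x - k x)
       - A_pairing \<Omega> \<Gamma>N \<Gamma>D H DpH g j \<gamma>' 1 \<mu> Dv Tv k
           (\<lambda>x. m x - \<mu> x) (\<lambda>x. Du x - Dv x) (\<lambda>x. Tu x - Tv x) (\<lambda>x. h x - k x) \<ge> 0"
proof -
  obtain C where hamiltonian: "convex_hamiltonian (lebesgue_on \<Omega>) H DpH \<alpha> C"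
    using ex_convex_hamiltonian_lebesgue_on[OF dom(1,2) H_meas H_C1 H_growth] by blast
  obtain Cg where g_bound: "\<forall>s\<ge>0. \<bar>g s\<bar> \<le> Cg * (s powr \<beta> + 1)"
    using ex_abs_le_of_two_sided_growth[OF g(3)] by blast
  obtain U where "open U" "\<Gamma>D = frontier \<Omega> \<inter> U"
    using bdry(1) by (auto simp: openin_open)
  then have \<Gamma>D: "\<Gamma>D \<in> sets borel" "\<Gamma>D \<subseteq> frontier \<Omega>"
    by auto
  note X1 = in_XplusD[OF X1 \<Gamma>D] and X2 = in_XplusD[OF X2 \<Gamma>D]
  have "1 < \<gamma>"
    using exponent_relations[OF expo(1-3)] by blast
  note interior = convex_hamiltonian.hamiltonian_part_monotone[OF hamiltonian expo(1-3) g(1)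
      strict_mono_on_imp_mono_on[OF g(2)] g_bound X1(1,2) X2(1,2) X1(3,4) X2(3,4)]
  note boundary = boundary_part_monotone[OF \<open>1 < \<gamma>\<close> expo(4) powr_ge_zero[of 1 \<gamma>']
      X1(6,7) X2(6,7) X1(5) X2(5)]
  show ?thesis
    using interior boundary unfolding A_pairing_def by linarith
qed

end
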